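(* Let $\Sigma$ be a non-empty finite or countably infinite alphabet and $\mu$ a probability map over $\Sigma$. If there exists a $\mu$-distributed sequence $\alpha\in\Sigma^\omega$, then $\mu$ is invariant, i.e. for every $w\in\Sigma^*$, $\sum_{a\in\Sigma}\mu(wa)=\mu(w)$ and $\sum_{a\in\Sigma}\mu(aw)=\mu(w)$.
   Context: A probability map over $\Sigma$ is $\mu:\Sigma^+\to[0,1]$ with $\sum_{w\in\Sigma^n}\mu(w)=1$ for every $n\ge1$, with the convention $\mu(\lambda)=1$ for the empty word $\lambda$. $\alpha$ is $\mu$-distributed if for every $w\in\Sigma^+$, $\lim_{N\to\infty}\#_w(\alpha|_{\le N})/N=\mu(w)$, where $\alpha|_{\le N}$ is the length-$N$ prefix and $\#_w(v)$ counts (possibly overlapping) occurrences of $w$ as a contiguous block in $v$. *)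

theory Defs
  imports "HOL-Analysis.Analysis" "HOL-Library.Countable"
begin

definition prob_map :: "('a list \<Rightarrow> real) \<Rightarrow> bool" where
  "prob_map \<mu> \<longleftrightarrow>
     \<mu> [] = 1 \<and>
     (\<forall>w. w \<noteq> [] \<longrightarrow> 0 \<le> \<mu> w \<and> \<mu> w \<le> 1) \<and>
     (\<forall>n\<ge>1. (\<mu> has_sum 1) {w. length w = n})"

definition occ :: "'a list \<Rightarrow> 'a list \<Rightarrow> nat" where
  "occ w v = card {i. i + length w \<le> length v \<and> take (length w) (drop i v) = w}"

definition prefix_of :: "(nat \<Rightarrow> 'a) \<Rightarrow> nat \<Rightarrow> 'a list" where
  "prefix_of \<alpha> N = map \<alpha> [0..<N]"

definition mu_distributed :: "('a list \<Rightarrow> real) \<Rightarrow> (nat \<Rightarrow> 'a) \<Rightarrow> bool" where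
  "mu_distributed \<mu> \<alpha> \<longleftrightarrow>
     (\<forall>w. w \<noteq> [] \<longrightarrow>
        (\<lambda>N. real (occ w (prefix_of \<alpha> N)) / real N) \<longlonglongrightarrow> \<mu> w)"

end

theory Submission
  imports Defs
begin

text \<open>
  Distinct letters a extend disjoint sets of occurrences of w in a prefix of \<alpha>, so passing to
  frequencies gives \<open>\<Sum>a\<in>F. \<mu>(wa) \<le> \<mu>(w)\<close> for every finite F, and likewise for \<open>\<mu>(aw)\<close>.
  Summed over all words w of length n, both sides of these inequalities total 1, because \<mu> is a
  probability distribution on words of length n and of length n+1. Hence no inequality can be
  strict.
\<close>

lemma has_sum_fibre_eq_if_le:
  fixes f :: "'a \<Rightarrow> 'b \<Rightarrow> real" and g :: "'a \<Rightarrow> real"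
  assumes g: "(g has_sum s) A"
    and f: "((\<lambda>(x, y). f x y) has_sum s) (A \<times> B)"
    and f_nonneg: "\<And>x y. 0 \<le> f x y"
    and le: "\<And>x F. x \<in> A \<Longrightarrow> finite F \<Longrightarrow> F \<subseteq> B \<Longrightarrow> sum (f x) F \<le> g x"
    and x: "x \<in> A"
  shows "(f x has_sum g x) B"
proof -
  have summable: "f y summable_on B" if "y \<in> A" for y
    using summable_on_SigmaD1[of f A "\<lambda>_. B" y] f that unfolding summable_on_def by auto
  define h where "h y = infsum (f y) B" for y
  have h: "(f y has_sum h y) B" if "y \<in> A" for y
    using summable[OF that] unfolding h_def by auto
  have h_le: "h y \<le> g y" if "y \<in> A" for y
    unfolding h_def by (rule infsum_le_finite_sums[OF summable[OF that]]) (use le that in auto)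
  have "(h has_sum s) A"
    by (rule has_sum_SigmaD[OF f[unfolded case_prod_unfold]]) (use h in auto)
  then have "((\<lambda>y. g y - h y) has_sum (s - s)) A"
    using has_sum_add[OF g has_sum_uminusI] by fastforce
  then have "g x - h x = 0"
    by (rule nonneg_has_sum_le_0D) (use h_le x in auto)
  then show ?thesis
    using h[OF x] by simp
qed

definition occ_pos :: "'a list \<Rightarrow> 'a list \<Rightarrow> nat set" where
  "occ_pos w v = {i. i + length w \<le> length v \<and> take (length w) (drop i v) = w}"

lemma occ_eq_card_occ_pos: "occ w v = card (occ_pos w v)"
  unfolding occ_def occ_pos_def ..

lemma finite_occ_pos: "finite (occ_pos w v)"
  unfolding occ_pos_def by (rule finite_subset[of _ "{..length v}"]) auto

lemma occ_pos_snoc: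
  "i \<in> occ_pos (w @ [a]) v \<longleftrightarrow>
     i \<in> occ_pos w v \<and> i + length w < length v \<and> v ! (i + length w) = a"
proof -
  have "take (Suc (length w)) (drop i v) = take (length w) (drop i v) @ [v ! (i + length w)]"
    if "i + length w < length v"
    using that by (simp add: take_Suc_conv_app_nth add.commute)
  then show ?thesis
    unfolding occ_pos_def by auto
qed

lemma occ_pos_Cons: "i \<in> occ_pos (a # w) v \<longleftrightarrow> Suc i \<in> occ_pos w v \<and> v ! i = a"
proof -
  have "drop i v = v ! i # drop (Suc i) v" if "i < length v"
    using that by (simp add: Cons_nth_drop_Suc)
  then show ?thesis
    unfolding occ_pos_def by (cases "i < length v") auto
qed

lemma sum_occ_snoc_le:
  assumes "finite F"
  shows "(\<Sum>a\<in>F. occ (w @ [a]) v) \<le> occ w v"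
proof -
  have "(\<Sum>a\<in>F. occ (w @ [a]) v) = card (\<Union>a\<in>F. occ_pos (w @ [a]) v)"
    unfolding occ_eq_card_occ_pos
    by (rule card_UN_disjoint[symmetric]) (auto simp: assms finite_occ_pos occ_pos_snoc)
  also have "\<dots> \<le> occ w v"
    unfolding occ_eq_card_occ_pos
    by (rule card_mono[OF finite_occ_pos]) (auto simp: occ_pos_snoc)
  finally show ?thesis .
qed

lemma sum_occ_Cons_le:
  assumes "finite F"
  shows "(\<Sum>a\<in>F. occ (a # w) v) \<le> occ w v"
proof -
  have "(\<Sum>a\<in>F. occ (a # w) v) = card (\<Union>a\<in>F. occ_pos (a # w) v)"
    unfolding occ_eq_card_occ_pos
    by (rule card_UN_disjoint[symmetric]) (auto simp: assms finite_occ_pos occ_pos_Cons)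
  also have "\<dots> = card (Suc ` (\<Union>a\<in>F. occ_pos (a # w) v))"
    by (simp add: card_image)
  also have "\<dots> \<le> occ w v"
    unfolding occ_eq_card_occ_pos
    by (rule card_mono[OF finite_occ_pos]) (auto simp: occ_pos_Cons)
  finally show ?thesis .
qed

lemma prob_map_has_sum_length:
  assumes "prob_map \<mu>"
  shows "(\<mu> has_sum 1) {w. length w = n}"
proof (cases "n = 0")
  case True
  then have "{w. length w = n} = {[] :: 'a list}"
    by auto
  moreover have "(\<mu> has_sum 1) {[]}"
    using assms has_sum_finite[of "{[]}" \<mu>] by (simp add: prob_map_def)
  ultimately show ?thesis
    by (simp only:)
qed (use assms in \<open>simp add: prob_map_def\<close>)

lemma prob_map_nonneg: "prob_map \<mu> \<Longrightarrow> 0 \<le> \<mu> w"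
  unfolding prob_map_def by (cases "w = []") auto

lemma prob_map_sum_singletons_le:
  assumes "prob_map \<mu>" and "finite F"
  shows "(\<Sum>a\<in>F. \<mu> [a]) \<le> 1"
proof -
  have "(\<Sum>a\<in>F. \<mu> [a]) = sum \<mu> ((\<lambda>a. [a]) ` F)"
    by (simp add: sum.reindex inj_on_def)
  also have "\<dots> \<le> 1"
    by (rule finite_sum_le_has_sum[OF prob_map_has_sum_length[OF assms(1), of 1]])
       (auto simp: assms prob_map_nonneg)
  finally show ?thesis .
qed

lemma mu_distributed_sum_le:
  assumes "mu_distributed \<mu> \<alpha>" and "finite F" and "w \<noteq> []" and "\<And>a. u a \<noteq> []"
    and occ_le: "\<And>N. (\<Sum>a\<in>F. occ (u a) (prefix_of \<alpha> N)) \<le> occ w (prefix_of \<alpha> N)"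
  shows "(\<Sum>a\<in>F. \<mu> (u a)) \<le> \<mu> w"
proof (rule LIMSEQ_le)
  have freq: "(\<lambda>N. real (occ v (prefix_of \<alpha> N)) / real N) \<longlonglongrightarrow> \<mu> v" if "v \<noteq> []" for v
    using assms(1) that unfolding mu_distributed_def by auto
  show "(\<lambda>N. \<Sum>a\<in>F. real (occ (u a) (prefix_of \<alpha> N)) / real N) \<longlonglongrightarrow> (\<Sum>a\<in>F. \<mu> (u a))"
    by (intro tendsto_sum freq assms(4))
  show "(\<lambda>N. real (occ w (prefix_of \<alpha> N)) / real N) \<longlonglongrightarrow> \<mu> w"
    by (rule freq[OF assms(3)])
  show "\<exists>N0. \<forall>N\<ge>N0. (\<Sum>a\<in>F. real (occ (u a) (prefix_of \<alpha> N)) / real N)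
                        \<le> real (occ w (prefix_of \<alpha> N)) / real N"
    using occ_le by (auto simp flip: sum_divide_distrib of_nat_sum intro!: divide_right_mono)
qed

lemma mu_distributed_sum_snoc_le:
  assumes "prob_map \<mu>" and "mu_distributed \<mu> \<alpha>" and "finite F"
  shows "(\<Sum>a\<in>F. \<mu> (w @ [a])) \<le> \<mu> w"
proof (cases "w = []")
  case True
  then show ?thesis
    using prob_map_sum_singletons_le[OF assms(1,3)] assms(1) by (simp add: prob_map_def)
next
  case False
  then show ?thesis
    by (intro mu_distributed_sum_le[OF assms(2,3)] sum_occ_snoc_le[OF assms(3)]) auto
qed

lemma mu_distributed_sum_Cons_le:
  assumes "prob_map \<mu>" and "mu_distributed \<mu> \<alpha>" and "finite F"
  shows "(\<Sum>a\<in>F. \<mu> (a # w)) \<le> \<mu> w"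
proof (cases "w = []")
  case True
  then show ?thesis
    using prob_map_sum_singletons_le[OF assms(1,3)] assms(1) by (simp add: prob_map_def)
next
  case False
  then show ?thesis
    by (intro mu_distributed_sum_le[OF assms(2,3)] sum_occ_Cons_le[OF assms(3)]) auto
qed

lemma bij_betw_snoc_length:
  "bij_betw (\<lambda>(w, a). w @ [a]) ({w. length w = n} \<times> UNIV) {v. length v = Suc n}"
proof (rule bij_betwI')
  fix v :: "'a list"
  assume "v \<in> {v. length v = Suc n}"
  then have "v = butlast v @ [last v]" "length (butlast v) = n"
    by (auto intro!: append_butlast_last_id[symmetric])
  then show "\<exists>x\<in>{w. length w = n} \<times> UNIV. v = (case x of (w, a) \<Rightarrow> w @ [a])"
    by (intro bexI[of _ "(butlast v, last v)"]) auto
qed auto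

lemma bij_betw_Cons_length:
  "bij_betw (\<lambda>(w, a). a # w) ({w. length w = n} \<times> UNIV) {v. length v = Suc n}"
proof (rule bij_betwI')
  fix v :: "'a list"
  assume "v \<in> {v. length v = Suc n}"
  then have "v = hd v # tl v" "length (tl v) = n"
    by (cases v; auto)+
  then show "\<exists>x\<in>{w. length w = n} \<times> UNIV. v = (case x of (w, a) \<Rightarrow> a # w)"
    by (intro bexI[of _ "(tl v, hd v)"]) auto
qed auto

lemma prob_map_has_sum_extensions:
  assumes "prob_map \<mu>"
    and bij: "bij_betw (\<lambda>(w, a). ext w a) ({w. length w = length w0} \<times> UNIV)
                {v. length v = Suc (length w0)}"
    and le: "\<And>w F. finite F \<Longrightarrow> (\<Sum>a\<in>F. \<mu> (ext w a)) \<le> \<mu> w"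
  shows "((\<lambda>a. \<mu> (ext w0 a)) has_sum \<mu> w0) UNIV"
proof (rule has_sum_fibre_eq_if_le[where f = "\<lambda>w a. \<mu> (ext w a)" and g = \<mu>])
  show "(\<mu> has_sum 1) {w. length w = length w0}"
    by (rule prob_map_has_sum_length[OF assms(1)])
  show "((\<lambda>(w, a). \<mu> (ext w a)) has_sum 1) ({w. length w = length w0} \<times> UNIV)"
    using has_sum_reindex_bij_betw[OF bij, where f = \<mu>]
      prob_map_has_sum_length[OF assms(1), of "Suc (length w0)"]
    by (simp add: case_prod_unfold)
qed (auto simp: le prob_map_nonneg[OF assms(1)])

theorem proposition2p2:
  fixes \<mu> :: "('a::countable) list \<Rightarrow> real"
  assumes "prob_map \<mu>"
    and "\<exists>\<alpha>. mu_distributed \<mu> \<alpha>"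
  shows "\<forall>w. ((\<lambda>a. \<mu> (w @ [a])) has_sum \<mu> w) UNIV \<and>
             ((\<lambda>a. \<mu> (a # w)) has_sum \<mu> w) UNIV"
proof
  fix w :: "'a list"
  obtain \<alpha> where \<alpha>: "mu_distributed \<mu> \<alpha>"
    using assms(2) by blast
  have "((\<lambda>a. \<mu> (w @ [a])) has_sum \<mu> w) UNIV"
    by (rule prob_map_has_sum_extensions[OF assms(1) bij_betw_snoc_length
          mu_distributed_sum_snoc_le[OF assms(1) \<alpha>]])
  moreover have "((\<lambda>a. \<mu> (a # w)) has_sum \<mu> w) UNIV"
    by (rule prob_map_has_sum_extensions[OF assms(1) bij_betw_Cons_length
          mu_distributed_sum_Cons_le[OF assms(1) \<alpha>]])
  ultimately show "((\<lambda>a. \<mu> (w @ [a])) has_sum \<mu> w) UNIV \<and> ((\<lambda>a. \<mu> (a # w)) has_sum \<mu> w) UNIV" ..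
qed

end
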